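(* Let $(G,\mathcal{B}_1,\mathcal{B}_2)$ be a Rota-Baxter system of groups. For any $a\in G$, $\mathcal{B}_1(a)\mathcal{B}_2(a)=1_G$ if and only if $\mathcal{B}_1(a)=1_G$ and $\mathcal{B}_2(a)=1_G$.
   Context: A Rota-Baxter system of groups is a triple $(G,\mathcal{B}_1,\mathcal{B}_2)$ where $G$ is a group with identity $1_G$ and $\mathcal{B}_1,\mathcal{B}_2:G\to G$ are maps such that for all $a,b\in G$: $\mathcal{B}_1(a)\mathcal{B}_1(b)=\mathcal{B}_1(\mathcal{B}_1(a)b\mathcal{B}_2(a))$ and $\mathcal{B}_2(b)\mathcal{B}_2(a)=\mathcal{B}_2(\mathcal{B}_1(a)b\mathcal{B}_2(a))$. *)

theory Defs
  imports "HOL-Algebra.Group"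
begin

definition rota_baxter_system :: "('a, 'b) monoid_scheme \<Rightarrow> ('a \<Rightarrow> 'a) \<Rightarrow> ('a \<Rightarrow> 'a) \<Rightarrow> bool" where
  "rota_baxter_system G B1 B2 \<longleftrightarrow>
     group G \<and>
     B1 \<in> carrier G \<rightarrow> carrier G \<and> B2 \<in> carrier G \<rightarrow> carrier G \<and>
     (\<forall>a\<in>carrier G. \<forall>b\<in>carrier G.
        B1 a \<otimes>\<^bsub>G\<^esub> B1 b = B1 (B1 a \<otimes>\<^bsub>G\<^esub> b \<otimes>\<^bsub>G\<^esub> B2 a) \<and>
        B2 b \<otimes>\<^bsub>G\<^esub> B2 a = B2 (B1 a \<otimes>\<^bsub>G\<^esub> b \<otimes>\<^bsub>G\<^esub> B2 a))"

end

theory Submission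
  imports Defs
begin

text \<open>Put b = 1 in both axioms: B1 a \<otimes> B1 1 = B1 (B1 a \<otimes> B2 a) and
  B2 1 \<otimes> B2 a = B2 (B1 a \<otimes> B2 a). If B1 a \<otimes> B2 a = 1, the right-hand sides
  become B1 1 and B2 1, and cancellation gives B1 a = 1 and B2 a = 1.\<close>

lemma rota_baxter_system_group:
  "rota_baxter_system G B1 B2 \<Longrightarrow> group G"
  unfolding rota_baxter_system_def by blast

lemma rota_baxter_system_closed:
  assumes "rota_baxter_system G B1 B2" and "a \<in> carrier G"
  shows "B1 a \<in> carrier G" and "B2 a \<in> carrier G"
  using assms unfolding rota_baxter_system_def by auto

lemma rota_baxter_system_one:
  fixes G (structure)
  assumes "rota_baxter_system G B1 B2" and "a \<in> carrier G"
  shows "B1 a \<otimes> B1 \<one> = B1 (B1 a \<otimes> B2 a)"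
    and "B2 \<one> \<otimes> B2 a = B2 (B1 a \<otimes> B2 a)"
proof -
  interpret group G using assms(1) by (rule rota_baxter_system_group)
  have "B1 a \<otimes> \<one> \<otimes> B2 a = B1 a \<otimes> B2 a"
    using rota_baxter_system_closed[OF assms] by simp
  then show "B1 a \<otimes> B1 \<one> = B1 (B1 a \<otimes> B2 a)"
    and "B2 \<one> \<otimes> B2 a = B2 (B1 a \<otimes> B2 a)"
    using assms unfolding rota_baxter_system_def by (metis one_closed)+
qed

theorem corollary4p5:
  fixes G (structure)
  assumes "rota_baxter_system G B1 B2"
    and "a \<in> carrier G"
  shows "B1 a \<otimes> B2 a = \<one> \<longleftrightarrow> B1 a = \<one> \<and> B2 a = \<one>"
proof -
  interpret group G using assms(1) by (rule rota_baxter_system_group)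
  note closed = rota_baxter_system_closed[OF assms(1)]
  show ?thesis
  proof
    assume prod_one: "B1 a \<otimes> B2 a = \<one>"
    have "B1 a \<otimes> B1 \<one> = B1 \<one>" and "B2 \<one> \<otimes> B2 a = B2 \<one>"
      using rota_baxter_system_one[OF assms] prod_one by simp_all
    then show "B1 a = \<one> \<and> B2 a = \<one>"
      using closed assms(2) by simp
  qed (simp add: closed assms(2))
qed

end
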